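(* Let $\mathcal{M}\subseteq\mathbb{S}^n$ and $B\in\mathbb{S}^n$. If $\mathcal{S}(\mathcal{M})$ is rank-one generated, then $$\inf_{x\in\mathbb{R}^n}\{x^\top M_0x:\ x^\top Mx\ge0\ \forall M\in\mathcal{M},\ x^\top Bx=1\}=\inf_{X\in\mathbb{S}^n}\{\langle M_0,X\rangle:\ \langle M,X\rangle\ge0\ \forall M\in\mathcal{M},\ \langle B,X\rangle=1,\ X\succeq0\}$$ for all $M_0\in\mathbb{S}^n$ for which the optimal value of the right-hand (SDP) problem is bounded from below. In particular, this equality holds whenever the feasible domain of the right-hand problem is bounded.
   Context: $\mathbb{S}^n$ denotes real symmetric $n\times n$ matrices with $\langle A,B\rangle=\mathrm{tr}(AB)$, $\mathbb{S}^n_+$ the PSD cone, $X\succeq0$ means $X$ is PSD. For $\mathcal{M}\subseteq\mathbb{S}^n$, $\mathcal{S}(\mathcal{M})=\{X\in\mathbb{S}^n_+:\langle M,X\rangle\ge0\ \forall M\in\mathcal{M}\}$. A closed convex cone $\mathcal{S}\subseteq\mathbb{S}^n_+$ is rank-one generated (ROG) if $\mathcal{S}=\mathrm{conv}(\mathcal{S}\cap\{xx^\top:x\in\mathbb{R}^n\})$. *)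

theory Defs
  imports "HOL-Analysis.Analysis"
begin

definition sym_mat :: "real^'n^'n \<Rightarrow> bool" where
  "sym_mat A \<longleftrightarrow> transpose A = A"

definition inner_mat :: "real^'n^'n \<Rightarrow> real^'n^'n \<Rightarrow> real" where
  "inner_mat A B = trace (A ** B)"

definition psd :: "real^'n^'n \<Rightarrow> bool" where
  "psd X \<longleftrightarrow> sym_mat X \<and> (\<forall>x. 0 \<le> x \<bullet> (X *v x))"

definition outer :: "real^'n \<Rightarrow> real^'n^'n" where
  "outer x = (\<chi> i j. x $ i * x $ j)"

definition S_cone :: "(real^'n^'n) set \<Rightarrow> (real^'n^'n) set" where
  "S_cone \<M> = {X. psd X \<and> (\<forall>M\<in>\<M>. 0 \<le> inner_mat M X)}"

definition ROG :: "(real^'n^'n) set \<Rightarrow> bool" where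
  "ROG S \<longleftrightarrow> S = convex hull (S \<inter> range outer)"

end

(*
  Using the ROG hypothesis, write a feasible X of the SDP as a sum of rank-one matrices x_i x_i^T
  of S(M), and put beta_i = x_i^T B x_i, mu_i = x_i^T M0 x_i, so that sum beta_i = 1 and
  sum mu_i = <M0, X>.  Each x_i with beta_i > 0 rescales to a QCQP-feasible point of value
  mu_i / beta_i; let r be the least such ratio, attained at j.  If beta_i <= 0, then
  x_i x_i^T - (beta_i / beta_j) x_j x_j^T lies in S(M) and is orthogonal to B, so it is a recession
  direction of the SDP feasible set; since the SDP objective is bounded below it cannot decrease
  along it, which gives mu_i >= beta_i r.  Summing, <M0, X> >= r >= the QCQP infimum.
*)
theory Submission
  imports Defs
begin

definition qcqp_feasible :: "(real^'n^'n) set \<Rightarrow> real^'n^'n \<Rightarrow> (real^'n) set" where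
  "qcqp_feasible \<M> B = {x. (\<forall>M\<in>\<M>. 0 \<le> x \<bullet> (M *v x)) \<and> x \<bullet> (B *v x) = 1}"

definition sdp_feasible :: "(real^'n^'n) set \<Rightarrow> real^'n^'n \<Rightarrow> (real^'n^'n) set" where
  "sdp_feasible \<M> B = {X \<in> S_cone \<M>. inner_mat B X = 1}"

lemma linear_inner_mat: "linear (inner_mat A)"
  by (rule linearI)
    (simp_all add: inner_mat_def trace_def matrix_matrix_mult_def sum.distrib sum_distrib_left
      algebra_simps)

lemmas inner_mat_add = linear_add[OF linear_inner_mat]
  and inner_mat_diff = linear_diff[OF linear_inner_mat]
  and inner_mat_scaleR = linear_scale[OF linear_inner_mat]
  and inner_mat_sum = linear_sum[OF linear_inner_mat]

lemma bounded_imp_bdd_below_inner_mat: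
  "bounded S \<Longrightarrow> bdd_below (inner_mat A ` S)"
  by (intro bounded_imp_bdd_below bounded_linear_image linear_conv_bounded_linear[THEN iffD1]
      linear_inner_mat)

lemma inner_mat_outer: "inner_mat A (outer x) = x \<bullet> (A *v x)"
  by (simp add: inner_mat_def trace_def matrix_matrix_mult_def outer_def inner_vec_def
      matrix_vector_mult_def sum_distrib_left algebra_simps)

lemma outer_scaleR: "outer (c *\<^sub>R x) = c\<^sup>2 *\<^sub>R outer x"
  by (simp add: outer_def vec_eq_iff power2_eq_square)

lemma quadratic_form_scaleR:
  fixes A :: "real^'n^'n"
  shows "(c *\<^sub>R x) \<bullet> (A *v (c *\<^sub>R x)) = c\<^sup>2 * (x \<bullet> (A *v x))"
  by (simp only: inner_mat_outer[symmetric] outer_scaleR inner_mat_scaleR real_scaleR_def)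

lemma psd_outer: "psd (outer x)"
proof -
  have "z \<bullet> (outer x *v z) = (x \<bullet> z)\<^sup>2" for z
    by (simp add: outer_def inner_vec_def matrix_vector_mult_def power2_eq_square
        sum_distrib_left sum_distrib_right algebra_simps)
  then show ?thesis
    by (simp add: psd_def sym_mat_def transpose_def vec_eq_iff outer_def)
qed

lemma psd_add: "psd X \<Longrightarrow> psd Y \<Longrightarrow> psd (X + Y)"
  by (simp add: psd_def sym_mat_def transpose_def vec_eq_iff matrix_vector_mult_add_rdistrib
      inner_add_right)

lemma psd_scaleR: "psd X \<Longrightarrow> 0 \<le> c \<Longrightarrow> psd (c *\<^sub>R X)"
  by (simp add: psd_def sym_mat_def transpose_def vec_eq_iff scaleR_matrix_vector_assoc[symmetric])

lemma S_cone_add: "X \<in> S_cone \<M> \<Longrightarrow> Y \<in> S_cone \<M> \<Longrightarrow> X + Y \<in> S_cone \<M>"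
  by (simp add: S_cone_def psd_add inner_mat_add)

lemma S_cone_scaleR: "0 \<le> c \<Longrightarrow> X \<in> S_cone \<M> \<Longrightarrow> c *\<^sub>R X \<in> S_cone \<M>"
  by (simp add: S_cone_def psd_scaleR inner_mat_scaleR)

lemma outer_in_S_cone_iff: "outer x \<in> S_cone \<M> \<longleftrightarrow> (\<forall>M\<in>\<M>. 0 \<le> x \<bullet> (M *v x))"
  by (simp add: S_cone_def psd_outer inner_mat_outer)

lemma outer_in_sdp_feasible: "x \<in> qcqp_feasible \<M> B \<Longrightarrow> outer x \<in> sdp_feasible \<M> B"
  by (simp add: qcqp_feasible_def sdp_feasible_def outer_in_S_cone_iff inner_mat_outer)

lemma ROG_imp_sum_outer:
  fixes S :: "(real^'n^'n) set"
  assumes "ROG S" "X \<in> S" and cone: "\<And>c Y. 0 \<le> c \<Longrightarrow> Y \<in> S \<Longrightarrow> c *\<^sub>R Y \<in> S"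
  obtains k :: nat and x where "\<forall>i<k. outer (x i) \<in> S" "X = (\<Sum>i<k. outer (x i))"
proof -
  have "X \<in> convex hull (S \<inter> range outer)"
    using assms by (simp add: ROG_def)
  then obtain T u where T: "finite T" "T \<subseteq> S \<inter> range outer" "\<forall>Z\<in>T. 0 \<le> u Z"
    and X: "X = (\<Sum>Z\<in>T. u Z *\<^sub>R Z)"
    unfolding convex_hull_explicit by blast
  obtain h where h: "bij_betw h {..<card T} T"
    using ex_bij_betw_nat_finite[OF T(1)] by (auto simp: atLeast0LessThan)
  have hT: "h i \<in> T" if "i < card T" for i
    using h that by (simp add: bij_betw_apply)
  define v where "v Z = (SOME v. Z = outer v)" for Z :: "real^'n^'n"
  have v: "outer (v Z) = Z" if "Z \<in> T" for Z
  proof -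
    have "\<exists>v. Z = outer v"
      using that T(2) by blast
    from someI_ex[OF this] show ?thesis
      unfolding v_def by simp
  qed
  define x where "x i = sqrt (u (h i)) *\<^sub>R v (h i)" for i
  have outer_x: "outer (x i) = u (h i) *\<^sub>R h i" if "i < card T" for i
    using hT[OF that] T(3) by (simp add: x_def outer_scaleR v)
  show thesis
  proof (rule that)
    show "\<forall>i<card T. outer (x i) \<in> S"
      using outer_x hT T(2,3) cone by (simp add: subset_iff)
    have "X = (\<Sum>i<card T. u (h i) *\<^sub>R h i)"
      unfolding X using sum.reindex_bij_betw[OF h, of "\<lambda>Z. u Z *\<^sub>R Z"] by simp
    then show "X = (\<Sum>i<card T. outer (x i))"
      using outer_x by simp
  qed
qed

lemma qcqp_inf_le_ratio:
  assumes "outer x \<in> S_cone \<M>" and pos: "0 < x \<bullet> (B *v x)"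
  shows "(INF y\<in>qcqp_feasible \<M> B. ereal (y \<bullet> (M0 *v y)))
    \<le> ereal (x \<bullet> (M0 *v x) / (x \<bullet> (B *v x)))"
proof -
  define y where "y = (1 / sqrt (x \<bullet> (B *v x))) *\<^sub>R x"
  have y: "y \<bullet> (A *v y) = x \<bullet> (A *v x) / (x \<bullet> (B *v x))" for A
    unfolding y_def quadratic_form_scaleR using pos by (simp add: power_divide)
  have "y \<in> qcqp_feasible \<M> B"
    using assms by (simp add: qcqp_feasible_def y outer_in_S_cone_iff)
  then show ?thesis
    by (rule INF_lower2) (simp add: y)
qed

lemma sdp_recession_nonneg:
  assumes bdd: "bdd_below (inner_mat M0 ` sdp_feasible \<M> B)"
    and X: "X \<in> sdp_feasible \<M> B" and D: "D \<in> S_cone \<M>" "inner_mat B D = 0"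
  shows "0 \<le> inner_mat M0 D"
proof (rule ccontr)
  assume neg: "\<not> 0 \<le> inner_mat M0 D"
  obtain c where c: "\<forall>Y\<in>sdp_feasible \<M> B. c \<le> inner_mat M0 Y"
    using bdd by (auto simp: bdd_below_def)
  define t where "t = (inner_mat M0 X - c + 1) / - inner_mat M0 D"
  have "c \<le> inner_mat M0 X"
    using c X by blast
  then have "0 \<le> t"
    using neg by (simp add: t_def divide_nonneg_neg)
  then have "X + t *\<^sub>R D \<in> sdp_feasible \<M> B"
    using X D by (simp add: sdp_feasible_def S_cone_add S_cone_scaleR inner_mat_add inner_mat_scaleR)
  then have "c \<le> inner_mat M0 (X + t *\<^sub>R D)"
    using c by blast
  also have "\<dots> = inner_mat M0 X + t * inner_mat M0 D"
    by (simp add: inner_mat_add inner_mat_scaleR)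
  finally have "c \<le> inner_mat M0 X + t * inner_mat M0 D" .
  moreover have "t * inner_mat M0 D = c - inner_mat M0 X - 1"
    using neg by (simp add: t_def)
  ultimately show False by linarith
qed

lemma sdp_bdd_below_pair_ratio:
  assumes bdd: "bdd_below (inner_mat M0 ` sdp_feasible \<M> B)" and "X \<in> sdp_feasible \<M> B"
    and x: "outer x \<in> S_cone \<M>" "x \<bullet> (B *v x) \<le> 0"
    and y: "outer y \<in> S_cone \<M>" "0 < y \<bullet> (B *v y)"
  shows "x \<bullet> (B *v x) * (y \<bullet> (M0 *v y) / (y \<bullet> (B *v y))) \<le> x \<bullet> (M0 *v x)"
proof -
  define \<alpha> where "\<alpha> = - (x \<bullet> (B *v x)) / (y \<bullet> (B *v y))"
  have "0 \<le> \<alpha>"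
    using x y by (simp add: \<alpha>_def divide_nonpos_pos)
  then have "outer x + \<alpha> *\<^sub>R outer y \<in> S_cone \<M>"
    using x y by (simp add: S_cone_add S_cone_scaleR)
  moreover have "inner_mat B (outer x + \<alpha> *\<^sub>R outer y) = 0"
    using y by (simp add: inner_mat_diff inner_mat_scaleR inner_mat_outer \<alpha>_def)
  ultimately have "0 \<le> inner_mat M0 (outer x + \<alpha> *\<^sub>R outer y)"
    using sdp_recession_nonneg[OF bdd \<open>X \<in> sdp_feasible \<M> B\<close>] by blast
  then show ?thesis
    by (simp add: inner_mat_diff inner_mat_scaleR inner_mat_outer \<alpha>_def)
qed

lemma ex_least_ratio_pos:
  fixes b m :: "nat \<Rightarrow> real"
  assumes "(\<Sum>i<k. b i) = 1"
  obtains j where "j < k" "0 < b j" "\<And>i. i < k \<Longrightarrow> 0 < b i \<Longrightarrow> m j / b j \<le> m i / b i"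
proof -
  define P where "P = {i. i < k \<and> 0 < b i}"
  have "finite P"
    by (simp add: P_def)
  have "P \<noteq> {}"
  proof
    assume "P = {}"
    then have "(\<Sum>i<k. b i) \<le> 0"
      by (intro sum_nonpos) (auto simp: P_def)
    with assms show False by simp
  qed
  define j where "j = arg_min_on (\<lambda>i. m i / b i) P"
  have "j \<in> P"
    unfolding j_def using \<open>finite P\<close> \<open>P \<noteq> {}\<close> by (rule arg_min_if_finite(1))
  moreover have "m j / b j \<le> m i / b i" if "i \<in> P" for i
    using arg_min_least[OF \<open>finite P\<close> \<open>P \<noteq> {}\<close> that] by (simp add: j_def)
  ultimately show thesis
    using that by (auto simp: P_def)
qed

lemma qcqp_inf_le_sdp_value:
  assumes rog: "ROG (S_cone \<M>)" and bdd: "bdd_below (inner_mat M0 ` sdp_feasible \<M> B)"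
    and X: "X \<in> sdp_feasible \<M> B"
  shows "(INF x\<in>qcqp_feasible \<M> B. ereal (x \<bullet> (M0 *v x))) \<le> ereal (inner_mat M0 X)"
proof -
  have "X \<in> S_cone \<M>"
    using X by (simp add: sdp_feasible_def)
  then obtain k :: nat and x where cone: "\<forall>i<k. outer (x i) \<in> S_cone \<M>"
    and X_eq: "X = (\<Sum>i<k. outer (x i))"
    using ROG_imp_sum_outer[OF rog _ S_cone_scaleR] by blast
  define \<beta> where "\<beta> i = x i \<bullet> (B *v x i)" for i
  define \<mu> where "\<mu> i = x i \<bullet> (M0 *v x i)" for i
  have sum_\<beta>: "(\<Sum>i<k. \<beta> i) = 1"
    using X by (simp add: sdp_feasible_def X_eq inner_mat_sum inner_mat_outer \<beta>_def)
  have sum_\<mu>: "(\<Sum>i<k. \<mu> i) = inner_mat M0 X"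
    by (simp add: X_eq inner_mat_sum inner_mat_outer \<mu>_def)
  obtain j where j: "j < k" "0 < \<beta> j"
    and j_min: "\<And>i. i < k \<Longrightarrow> 0 < \<beta> i \<Longrightarrow> \<mu> j / \<beta> j \<le> \<mu> i / \<beta> i"
    using ex_least_ratio_pos[OF sum_\<beta>] by blast
  have le: "\<beta> i * (\<mu> j / \<beta> j) \<le> \<mu> i" if "i < k" for i
  proof (cases "0 < \<beta> i")
    case True
    have "\<beta> i * (\<mu> j / \<beta> j) \<le> \<beta> i * (\<mu> i / \<beta> i)"
      using True j_min that by (intro mult_left_mono) auto
    with True show ?thesis by simp
  next
    case False
    then show ?thesis
      using sdp_bdd_below_pair_ratio[OF bdd X] cone that j by (simp add: \<beta>_def \<mu>_def)
  qed
  have "\<mu> j / \<beta> j = (\<Sum>i<k. \<beta> i * (\<mu> j / \<beta> j))"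
    unfolding sum_distrib_right[symmetric] sum_\<beta> by simp
  also have "\<dots> \<le> inner_mat M0 X"
    unfolding sum_\<mu>[symmetric] by (intro sum_mono le) simp
  finally have "ereal (\<mu> j / \<beta> j) \<le> ereal (inner_mat M0 X)" by simp
  moreover have "(INF x\<in>qcqp_feasible \<M> B. ereal (x \<bullet> (M0 *v x))) \<le> ereal (\<mu> j / \<beta> j)"
    using cone j unfolding \<beta>_def \<mu>_def by (intro qcqp_inf_le_ratio) simp_all
  ultimately show ?thesis by (rule order_trans[rotated])
qed

lemma qcqp_inf_eq_sdp_inf:
  assumes "ROG (S_cone \<M>)" and "bdd_below (inner_mat M0 ` sdp_feasible \<M> B)"
  shows "(INF x\<in>qcqp_feasible \<M> B. ereal (x \<bullet> (M0 *v x)))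
    = (INF X\<in>sdp_feasible \<M> B. ereal (inner_mat M0 X))"
proof (rule antisym)
  show "(INF x\<in>qcqp_feasible \<M> B. ereal (x \<bullet> (M0 *v x)))
    \<le> (INF X\<in>sdp_feasible \<M> B. ereal (inner_mat M0 X))"
    using qcqp_inf_le_sdp_value[OF assms] by (rule INF_greatest)
  show "(INF X\<in>sdp_feasible \<M> B. ereal (inner_mat M0 X))
    \<le> (INF x\<in>qcqp_feasible \<M> B. ereal (x \<bullet> (M0 *v x)))"
  proof (rule INF_greatest)
    fix x
    assume "x \<in> qcqp_feasible \<M> B"
    then show "(INF X\<in>sdp_feasible \<M> B. ereal (inner_mat M0 X)) \<le> ereal (x \<bullet> (M0 *v x))"
      by (rule INF_lower2[OF outer_in_sdp_feasible]) (simp add: inner_mat_outer)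
  qed
qed

theorem lemma5p2:
  fixes \<M> :: "(real^'n^'n) set" and B :: "real^'n^'n"
  assumes "\<forall>M\<in>\<M>. sym_mat M"
    and "sym_mat B"
    and "ROG (S_cone \<M>)"
  shows "(\<forall>M0. sym_mat M0 \<longrightarrow>
            (\<exists>c. \<forall>X. sym_mat X \<and> psd X \<and> (\<forall>M\<in>\<M>. 0 \<le> inner_mat M X) \<and> inner_mat B X = 1
                     \<longrightarrow> c \<le> inner_mat M0 X) \<longrightarrow>
            Inf ((\<lambda>x. ereal (x \<bullet> (M0 *v x))) `
                   {x. (\<forall>M\<in>\<M>. 0 \<le> x \<bullet> (M *v x)) \<and> x \<bullet> (B *v x) = 1})
          = Inf ((\<lambda>X. ereal (inner_mat M0 X)) `
                   {X. sym_mat X \<and> (\<forall>M\<in>\<M>. 0 \<le> inner_mat M X) \<and> inner_mat B X = 1 \<and> psd X}))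
       \<and> (bounded {X. sym_mat X \<and> (\<forall>M\<in>\<M>. 0 \<le> inner_mat M X) \<and> inner_mat B X = 1 \<and> psd X} \<longrightarrow>
          (\<forall>M0. sym_mat M0 \<longrightarrow>
            Inf ((\<lambda>x. ereal (x \<bullet> (M0 *v x))) `
                   {x. (\<forall>M\<in>\<M>. 0 \<le> x \<bullet> (M *v x)) \<and> x \<bullet> (B *v x) = 1})
          = Inf ((\<lambda>X. ereal (inner_mat M0 X)) `
                   {X. sym_mat X \<and> (\<forall>M\<in>\<M>. 0 \<le> inner_mat M X) \<and> inner_mat B X = 1 \<and> psd X})))"
proof -
  have sdp_set: "{X. sym_mat X \<and> (\<forall>M\<in>\<M>. 0 \<le> inner_mat M X) \<and> inner_mat B X = 1 \<and> psd X}
    = sdp_feasible \<M> B"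
    unfolding sdp_feasible_def S_cone_def psd_def by blast
  show ?thesis
  proof (unfold sdp_set qcqp_feasible_def[symmetric], intro conjI impI allI)
    fix M0 :: "real^'n^'n"
    assume "\<exists>c. \<forall>X. sym_mat X \<and> psd X \<and> (\<forall>M\<in>\<M>. 0 \<le> inner_mat M X) \<and> inner_mat B X = 1
      \<longrightarrow> c \<le> inner_mat M0 X"
    then obtain c where c: "\<forall>X. sym_mat X \<and> psd X \<and> (\<forall>M\<in>\<M>. 0 \<le> inner_mat M X)
      \<and> inner_mat B X = 1 \<longrightarrow> c \<le> inner_mat M0 X"
      by blast
    have "bdd_below (inner_mat M0 ` sdp_feasible \<M> B)"
      by (rule bdd_belowI2[of _ c]) (use c in \<open>simp add: sdp_feasible_def S_cone_def psd_def\<close>)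
    then show "(INF x\<in>qcqp_feasible \<M> B. ereal (x \<bullet> (M0 *v x)))
      = (INF X\<in>sdp_feasible \<M> B. ereal (inner_mat M0 X))"
      by (rule qcqp_inf_eq_sdp_inf[OF assms(3)])
  next
    fix M0 :: "real^'n^'n"
    assume "bounded (sdp_feasible \<M> B)"
    then show "(INF x\<in>qcqp_feasible \<M> B. ereal (x \<bullet> (M0 *v x)))
      = (INF X\<in>sdp_feasible \<M> B. ereal (inner_mat M0 X))"
      by (intro qcqp_inf_eq_sdp_inf assms(3) bounded_imp_bdd_below_inner_mat)
  qed
qed

end
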